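(* In the standing setup, assume in addition that $A$ is generic (three pairwise distinct double eigenvalues) and that $\det f_0'(x)$ is not identically zero. Then for all $x\in\mathbb R^6$, $$(f_0'(x))^2=p_0(x)I+\sum_{i=1}^3 q_i(x)B_i^{\rm T},$$ where $p_0(x)=\tfrac18\operatorname{tr}(f_0'(x))^2$ and $q_i(x)=\tfrac18\operatorname{tr}\big(B_i^{\rm T}(f_0'(x))^2\big)=\tfrac18\operatorname{tr}\big(f_0'(x)g_i'(x)\big)$, with $g_i=B_i^{\rm T}f_0$.
   Context: Standing setup: $J=\begin{pmatrix}0&I_3\\-I_3&0\end{pmatrix}$ ($6\times6$). $A$ is a fixed real $6\times 6$ skew-Hamiltonian matrix ($A^{\rm T}J=JA$). $H_0$ is a homogeneous cubic polynomial on $\mathbb R^6$ with $A\nabla^2H_0(x)=\nabla^2H_0(x)A^{\rm T}$ for all $x$ ($\nabla^2$ = Hesse matrix), $H_1,H_2$ homogeneous cubic polynomials with $\nabla H_1=A\nabla H_0$, $\nabla H_2=A\nabla H_1$, $f_i=J\nabla H_i$, primes denote Jacobi matrices. Genericity: the characteristic polynomial of $A$ (a square of a cubic) has three pairwise distinct roots $\lambda_1,\lambda_2,\lambda_3$, each a double eigenvalue. $B_i=\alpha_iI+\beta_iA+\gamma_iA^2$ ($i=1,2,3$), where $\alpha_i+\beta_i\lambda+\gamma_i\lambda^2$ is the unique polynomial of degree $\le 2$ equal to $-1$ at $\lambda_i$ and to $1$ at the other two eigenvalues; then $B_i^2=I$ and $B_1+B_2+B_3=I$. *)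

theory Defs
  imports "HOL-Analysis.Analysis"
begin

text \<open>Phase space R^6 = real^6; index type 6 has elements 0,...,5 (ordered).
  Coordinates 0,1,2 are q, coordinates 3,4,5 are p.\<close>

text \<open>The standard symplectic matrix J = [[0, I_3], [-I_3, 0]].\<close>
definition Jmat :: "real^6^6" where
  "Jmat = (\<chi> i j. if j = i + 3 then (if i < 3 then 1 else -1) else 0)"

definition hom_cubic :: "(real^6 \<Rightarrow> real) \<Rightarrow> bool" where
  "hom_cubic H \<longleftrightarrow> (\<exists>c :: 6 \<Rightarrow> 6 \<Rightarrow> 6 \<Rightarrow> real.
      \<forall>x. H x = (\<Sum>i\<in>UNIV. \<Sum>j\<in>UNIV. \<Sum>k\<in>UNIV. c i j k * x$i * x$j * x$k))"

definition pderiv :: "(real^'n \<Rightarrow> real) \<Rightarrow> real^'n \<Rightarrow> 'n \<Rightarrow> real" where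
  "pderiv H x j = deriv (\<lambda>t. H (x + t *\<^sub>R axis j 1)) 0"

definition grad :: "(real^'n \<Rightarrow> real) \<Rightarrow> real^'n \<Rightarrow> real^'n" where
  "grad H x = (\<chi> j. pderiv H x j)"

definition jac :: "(real^'n \<Rightarrow> real^'m) \<Rightarrow> real^'n \<Rightarrow> real^'n^'m" where
  "jac F x = (\<chi> i j. pderiv (\<lambda>y. F y $ i) x j)"

definition hess :: "(real^'n \<Rightarrow> real) \<Rightarrow> real^'n \<Rightarrow> real^'n^'n" where
  "hess H x = jac (grad H) x"

end

theory Submission
  imports Defs
begin

text \<open>Put \<open>T = A\<^sup>T\<close> and \<open>\<omega>(u, v) = u \<bullet> J v\<close>. Skew-Hamiltonicity makes \<open>T\<close> symmetric
  for \<open>\<omega>\<close>, and a skew-Hamiltonian \<open>6\<times>6\<close> matrix is annihilated by its Pfaffian characteristic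
  cubic. As the three double eigenvalues are distinct, \<open>T\<close> is diagonalisable and its eigenspaces
  \<open>E\<^sub>1, E\<^sub>2, E\<^sub>3\<close> are mutually \<open>\<omega>\<close>-orthogonal symplectic planes; \<open>B\<^sub>i\<^sup>T\<close> acts on \<open>E\<^sub>k\<close>
  as \<open>\<epsilon>\<^sub>i\<^sub>k\<close>, which is \<open>-1\<close> for \<open>i = k\<close> and \<open>1\<close> otherwise. The matrix
  \<open>M = f\<^sub>0'(x) = J \<nabla>\<^sup>2H\<^sub>0(x)\<close> is Hamiltonian and commutes with \<open>T\<close>, so it preserves each
  plane \<open>E\<^sub>k\<close> and is trace-free there; hence \<open>M\<^sup>2\<close> acts on \<open>E\<^sub>k\<close> as a scalar \<open>\<kappa>\<^sub>k\<close>.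
  Taking traces in a basis adapted to the planes gives \<open>tr M\<^sup>2 = 2 \<Sum>\<^sub>k \<kappa>\<^sub>k\<close> and
  \<open>tr (B\<^sub>i\<^sup>T M\<^sup>2) = 2 \<Sum>\<^sub>k \<epsilon>\<^sub>i\<^sub>k \<kappa>\<^sub>k\<close>, so both sides of the identity act on \<open>E\<^sub>k\<close> as \<open>\<kappa>\<^sub>k\<close>.
  The second formula for \<open>q\<^sub>i\<close> is \<open>tr (B\<^sub>i\<^sup>T M M) = tr (M B\<^sub>i\<^sup>T M)\<close> with \<open>g\<^sub>i' = B\<^sub>i\<^sup>T M\<close>.\<close>

lemma exhaust_6:
  fixes x :: 6
  shows "x = 0 \<or> x = 1 \<or> x = 2 \<or> x = 3 \<or> x = 4 \<or> x = 5"
proof (induct x)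
  case (of_int z)
  then have "z = 0 \<or> z = 1 \<or> z = 2 \<or> z = 3 \<or> z = 4 \<or> z = 5" by fastforce
  then show ?case by auto
qed

lemma forall_6: "(\<forall>i::6. P i) \<longleftrightarrow> P 0 \<and> P 1 \<and> P 2 \<and> P 3 \<and> P 4 \<and> P 5"
  by (metis exhaust_6)

lemma UNIV_6: "UNIV = {0, 1, 2, 3, 4, 5::6}"
  using exhaust_6 by auto

lemma sum_6: "sum f (UNIV::6 set) = f 0 + f 1 + f 2 + f 3 + f 4 + f 5"
  unfolding UNIV_6 by (simp add: ac_simps)

lemma less_three_6:
  "(0::6) < 3" "(1::6) < 3" "(2::6) < 3" "\<not> (3::6) < 3" "\<not> (4::6) < 3" "\<not> (5::6) < 3"
  by (simp_all add: less_bit0_def bit0.Rep_0 bit0.Rep_1 bit0.Rep_numeral)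

lemma Jmat_Jmat_vector: "Jmat *v (Jmat *v x) = - x"
  unfolding vec_eq_iff forall_6
  by (simp add: Jmat_def matrix_vector_mult_def sum_6 less_three_6)

lemma inner_Jmat_Jmat: "(Jmat *v x) \<bullet> (Jmat *v y) = x \<bullet> y"
  by (simp add: Jmat_def matrix_vector_mult_def inner_vec_def sum_6 less_three_6)

lemma inner_matrix_vector_transpose:
  fixes K :: "real^'n^'m"
  shows "(K *v u) \<bullet> y = u \<bullet> (transpose K *v y)"
  by (metis dot_lmul_matrix vector_transpose_matrix)

definition omega :: "real^6 \<Rightarrow> real^6 \<Rightarrow> real" where
  "omega u v = u \<bullet> (Jmat *v v)"

lemma omega_antisym: "omega u v = - omega v u"
  by (simp add: omega_def Jmat_def matrix_vector_mult_def inner_vec_def sum_6 less_three_6)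

lemma omega_self [simp]: "omega u u = 0"
  using omega_antisym[of u u] by simp

lemma omega_bilinear:
  "omega u (x + y) = omega u x + omega u y"
  "omega u (x - y) = omega u x - omega u y"
  "omega u (c *\<^sub>R x) = c * omega u x"
  "omega (x + y) v = omega x v + omega y v"
  "omega (c *\<^sub>R x) v = c * omega x v"
  by (simp_all add: omega_def matrix_vector_right_distrib matrix_vector_mult_diff_distrib
      matrix_vector_mult_scaleR inner_add_left inner_add_right inner_diff_right)

lemma omega_Jmat_self: "omega u (- (Jmat *v u)) = u \<bullet> u"
  by (simp add: omega_def Jmat_def matrix_vector_mult_def inner_vec_def sum_6 less_three_6
      power2_eq_square)

lemma hamiltonian_omega_antisym:
  fixes S :: "real^6^6"
  assumes "transpose S = S"
  shows "omega ((Jmat ** S) *v x) y = - omega x ((Jmat ** S) *v y)"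
proof -
  have "omega ((Jmat ** S) *v x) y = (S *v x) \<bullet> y"
    by (simp add: omega_def inner_Jmat_Jmat flip: matrix_vector_mul_assoc)
  also have "\<dots> = x \<bullet> (S *v y)"
    by (metis inner_matrix_vector_transpose assms)
  finally have "omega ((Jmat ** S) *v x) y = x \<bullet> (S *v y)" .
  moreover have "omega x ((Jmat ** S) *v y) = - (x \<bullet> (S *v y))"
    by (simp add: omega_def Jmat_Jmat_vector flip: matrix_vector_mul_assoc)
  ultimately show ?thesis by simp
qed

lemma omega_eigenvectors_orthogonal:
  assumes T_sym: "\<And>x y. omega (T *v x) y = omega x (T *v y)"
    and "T *v x = p *\<^sub>R x" "T *v y = q *\<^sub>R y" "p \<noteq> q"
  shows "omega x y = 0"
proof -
  have "p * omega x y = q * omega x y"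
    using T_sym[of x y] assms(2,3) by (simp add: omega_bilinear)
  then show ?thesis using \<open>p \<noteq> q\<close> by simp
qed

subsection \<open>Skew-Hamiltonian matrices\<close>

lemma skew_hamiltonian_entries:
  fixes C :: "real^6^6"
  assumes "transpose C ** Jmat = Jmat ** C"
  shows
   "C$3$3 = C$0$0" "C$3$4 = C$1$0" "C$3$5 = C$2$0"
   "C$4$3 = C$0$1" "C$4$4 = C$1$1" "C$4$5 = C$2$1"
   "C$5$3 = C$0$2" "C$5$4 = C$1$2" "C$5$5 = C$2$2"
   "C$0$3 = 0" "C$1$4 = 0" "C$2$5 = 0" "C$1$3 = - C$0$4" "C$2$3 = - C$0$5" "C$2$4 = - C$1$5"
   "C$3$0 = 0" "C$4$1 = 0" "C$5$2 = 0" "C$4$0 = - C$3$1" "C$5$0 = - C$3$2" "C$5$1 = - C$4$2"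
proof -
  have "\<forall>i j. (\<Sum>k\<in>UNIV. C$k$i * Jmat$k$j) = (\<Sum>k\<in>UNIV. Jmat$i$k * C$k$j)"
    using assms by (simp add: vec_eq_iff matrix_matrix_mult_def transpose_def)
  from this[unfolded forall_6, simplified sum_6 Jmat_def vec_lambda_beta less_three_6, simplified]
  show
   "C$3$3 = C$0$0" "C$3$4 = C$1$0" "C$3$5 = C$2$0"
   "C$4$3 = C$0$1" "C$4$4 = C$1$1" "C$4$5 = C$2$1"
   "C$5$3 = C$0$2" "C$5$4 = C$1$2" "C$5$5 = C$2$2"
   "C$0$3 = 0" "C$1$4 = 0" "C$2$5 = 0" "C$1$3 = - C$0$4" "C$2$3 = - C$0$5" "C$2$4 = - C$1$5"
   "C$3$0 = 0" "C$4$1 = 0" "C$5$2 = 0" "C$4$0 = - C$3$1" "C$5$0 = - C$3$2" "C$5$1 = - C$4$2"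
    by linarith+
qed

lemma skew_hamiltonian_transpose:
  fixes A :: "real^6^6"
  assumes "transpose A ** Jmat = Jmat ** A"
  shows "A ** Jmat = Jmat ** transpose A"
  unfolding vec_eq_iff forall_6
  by (simp add: matrix_matrix_mult_def transpose_def Jmat_def sum_6 less_three_6
      skew_hamiltonian_entries[OF assms])

lemma skew_hamiltonian_omega_symmetric:
  fixes A :: "real^6^6"
  assumes "transpose A ** Jmat = Jmat ** A"
  shows "omega (transpose A *v x) y = omega x (transpose A *v y)"
proof -
  have "omega (transpose A *v x) y = x \<bullet> ((A ** Jmat) *v y)"
    by (metis omega_def inner_matrix_vector_transpose transpose_transpose matrix_vector_mul_assoc)
  also have "\<dots> = omega x (transpose A *v y)"
    by (simp only: omega_def skew_hamiltonian_transpose[OF assms] matrix_vector_mul_assoc)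
  finally show ?thesis .
qed

lemma skew_hamiltonian_commute_hamiltonian:
  fixes A S :: "real^6^6"
  assumes "transpose A ** Jmat = Jmat ** A" and "A ** S = S ** transpose A"
  shows "(Jmat ** S) ** transpose A = transpose A ** (Jmat ** S)"
proof -
  have "(Jmat ** S) ** transpose A = (Jmat ** A) ** S"
    by (simp add: assms(2) flip: matrix_mul_assoc)
  also have "\<dots> = transpose A ** (Jmat ** S)"
    by (simp add: assms(1) matrix_mul_assoc)
  finally show ?thesis .
qed

text \<open>The coefficients are those of the Pfaffian characteristic polynomial \<open>p\<close> of \<open>C\<close>,
  for which \<open>det (\<mu> - C) = p \<mu>\<^sup>2\<close>.\<close>

lemma skew_hamiltonian_cubic_identity:
  fixes C :: "real^6^6"
  assumes "transpose C ** Jmat = Jmat ** C"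
  shows "\<exists>a b c. \<forall>w. C *v (C *v (C *v w)) = a *\<^sub>R (C *v (C *v w)) - b *\<^sub>R (C *v w) + c *\<^sub>R w"
proof -
  let ?a = "C$0$0 + C$1$1 + C$2$2"
  let ?b = "C$0$0 * C$1$1 + C$0$0 * C$2$2 + C$1$1 * C$2$2 - C$0$1 * C$1$0 - C$0$2 * C$2$0
    - C$1$2 * C$2$1 + C$0$4 * C$3$1 + C$0$5 * C$3$2 + C$1$5 * C$4$2"
  let ?c = "C$0$0 * C$1$1 * C$2$2 - C$0$0 * C$1$2 * C$2$1 + C$0$0 * C$1$5 * C$4$2
    - C$0$1 * C$1$0 * C$2$2 + C$0$1 * C$1$2 * C$2$0 - C$0$1 * C$1$5 * C$3$2
    + C$0$2 * C$1$0 * C$2$1 - C$0$2 * C$1$1 * C$2$0 + C$0$2 * C$1$5 * C$3$1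
    - C$1$0 * C$0$5 * C$4$2 + C$1$1 * C$0$5 * C$3$2 - C$1$2 * C$0$5 * C$3$1
    + C$2$0 * C$0$4 * C$4$2 - C$2$1 * C$0$4 * C$3$2 + C$2$2 * C$0$4 * C$3$1"
  have cubic: "C ** (C ** C) = ?a *\<^sub>R (C ** C) - ?b *\<^sub>R C + ?c *\<^sub>R mat 1"
    unfolding vec_eq_iff forall_6
    by (simp add: matrix_matrix_mult_def mat_def sum_6 skew_hamiltonian_entries[OF assms];
        simp add: algebra_simps)
  have "C *v (C *v (C *v w)) = ?a *\<^sub>R (C *v (C *v w)) - ?b *\<^sub>R (C *v w) + ?c *\<^sub>R w" for w
    using arg_cong[OF cubic, of "\<lambda>X. X *v w"]
    by (simp add: matrix_vector_mul_assoc matrix_vector_mult_add_rdistrib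
        matrix_vector_mult_diff_rdistrib flip: scaleR_matrix_vector_assoc)
  then show ?thesis by blast
qed

subsection \<open>Spectral structure of skew-Hamiltonian matrices\<close>

definition annihilated_by_roots :: "real^'n^'n \<Rightarrow> real \<Rightarrow> real \<Rightarrow> real \<Rightarrow> bool" where
  "annihilated_by_roots T a b c \<longleftrightarrow> (\<forall>w. T *v (T *v (T *v w)) =
     (a + b + c) *\<^sub>R (T *v (T *v w)) - (a * b + a * c + b * c) *\<^sub>R (T *v w) + (a * b * c) *\<^sub>R w)"

lemma annihilated_by_roots_perms:
  assumes "annihilated_by_roots T a b c"
  shows "annihilated_by_roots T b a c" "annihilated_by_roots T c a b"
  using assms unfolding annihilated_by_roots_def by (simp_all add: algebra_simps)

lemma eigenvalue_root_of_annihilating_cubic: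
  fixes T :: "real^'n^'n"
  assumes cubic: "\<And>w. T *v (T *v (T *v w)) = a *\<^sub>R (T *v (T *v w)) - b *\<^sub>R (T *v w) + c *\<^sub>R w"
    and "u \<noteq> 0" "T *v u = l *\<^sub>R u"
  shows "l^3 - a * l^2 + b * l - c = 0"
proof -
  have "(l^3 - a * l^2 + b * l - c) *\<^sub>R u = 0"
    using cubic[of u] \<open>T *v u = l *\<^sub>R u\<close>
    by (simp add: matrix_vector_mult_scaleR algebra_simps power2_eq_square power3_eq_cube)
  then show ?thesis using \<open>u \<noteq> 0\<close> by simp
qed

lemma cubic_coeffs_of_distinct_roots:
  fixes a b c x y z :: real
  assumes "x \<noteq> y" "x \<noteq> z" "y \<noteq> z"
    and x: "x^3 - a * x^2 + b * x - c = 0"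
    and y: "y^3 - a * y^2 + b * y - c = 0"
    and z: "z^3 - a * z^2 + b * z - c = 0"
  shows "a = x + y + z" "b = x * y + x * z + y * z" "c = x * y * z"
proof -
  have "(x - y) * (x^2 + x * y + y^2 - a * (x + y) + b) = 0"
    using x y by (simp add: algebra_simps power2_eq_square power3_eq_cube)
  then have xy: "x^2 + x * y + y^2 - a * (x + y) + b = 0" using \<open>x \<noteq> y\<close> by simp
  have "(x - z) * (x^2 + x * z + z^2 - a * (x + z) + b) = 0"
    using x z by (simp add: algebra_simps power2_eq_square power3_eq_cube)
  then have xz: "x^2 + x * z + z^2 - a * (x + z) + b = 0" using \<open>x \<noteq> z\<close> by simp
  have "(y - z) * (x + y + z - a) = 0"
    using xy xz by (simp add: algebra_simps power2_eq_square)
  then show a: "a = x + y + z" using \<open>y \<noteq> z\<close> by simp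
  show b: "b = x * y + x * z + y * z"
    using xy a by (simp add: algebra_simps power2_eq_square)
  show "c = x * y * z"
    using x a b by (simp add: algebra_simps power2_eq_square power3_eq_cube)
qed

lemma annihilated_by_distinct_eigenvalues:
  fixes T :: "real^'n^'n"
  assumes cubic: "\<And>w. T *v (T *v (T *v w)) = a *\<^sub>R (T *v (T *v w)) - b *\<^sub>R (T *v w) + c *\<^sub>R w"
    and "x \<noteq> y" "x \<noteq> z" "y \<noteq> z"
    and "ux \<noteq> 0" "T *v ux = x *\<^sub>R ux"
    and "uy \<noteq> 0" "T *v uy = y *\<^sub>R uy"
    and "uz \<noteq> 0" "T *v uz = z *\<^sub>R uz"
  shows "annihilated_by_roots T x y z"
proof -
  note root = eigenvalue_root_of_annihilating_cubic[OF cubic]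
  note coeffs = cubic_coeffs_of_distinct_roots[OF assms(2-4)
      root[OF assms(5,6)] root[OF assms(7,8)] root[OF assms(9,10)]]
  show ?thesis
    unfolding annihilated_by_roots_def using cubic by (simp add: coeffs)
qed

lemma skew_hamiltonian_annihilated_by_eigenvalues:
  fixes C :: "real^6^6" and lam :: "nat \<Rightarrow> real"
  assumes skew: "transpose C ** Jmat = Jmat ** C"
    and distinct: "\<forall>i\<in>{1,2,3}. \<forall>j\<in>{1,2,3}. i \<noteq> j \<longrightarrow> lam i \<noteq> lam j"
    and eigenvector: "\<And>k. k \<in> {1,2,3} \<Longrightarrow> \<exists>u. u \<noteq> 0 \<and> C *v u = lam k *\<^sub>R u"
  shows "annihilated_by_roots C (lam 1) (lam 2) (lam 3)"
proof -
  obtain a b c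
    where "\<And>w. C *v (C *v (C *v w)) = a *\<^sub>R (C *v (C *v w)) - b *\<^sub>R (C *v w) + c *\<^sub>R w"
    using skew_hamiltonian_cubic_identity[OF skew] by blast
  moreover have "lam 1 \<noteq> lam 2" "lam 1 \<noteq> lam 3" "lam 2 \<noteq> lam 3"
    using distinct by auto
  ultimately show ?thesis
    using eigenvector[of 1] eigenvector[of 2] eigenvector[of 3]
      annihilated_by_distinct_eigenvalues by blast
qed

lemma eigenvector_of_det_zero:
  fixes T :: "real^'n^'n"
  assumes "det (l *\<^sub>R mat 1 - T) = 0"
  obtains u where "u \<noteq> 0" "T *v u = l *\<^sub>R u"
proof -
  have "rank (l *\<^sub>R mat 1 - T) < CARD('n)" using assms det_eq_0_rank by blast
  then obtain u where u: "u \<noteq> 0" "(l *\<^sub>R mat 1 - T) *v u = 0"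
    using matrix_nonfull_linear_equations_eq by (metis less_irrefl)
  have "(l *\<^sub>R mat 1 - T) *v u = l *\<^sub>R u - T *v u"
    by (simp add: matrix_vector_mult_diff_rdistrib flip: scaleR_matrix_vector_assoc)
  then show ?thesis using u that by simp
qed

lemma exists_symplectic_eigenpair:
  assumes T_sym: "\<And>x y. omega (T *v x) y = omega x (T *v y)"
    and roots: "annihilated_by_roots T a b c" and "a \<noteq> b" "a \<noteq> c"
    and u: "u \<noteq> 0" "T *v u = a *\<^sub>R u"
  shows "\<exists>v. T *v v = a *\<^sub>R v \<and> omega u v \<noteq> 0"
proof -
  define w where "w = - (Jmat *v u)"
  define v where "v = T *v (T *v w) - (b + c) *\<^sub>R (T *v w) + (b * c) *\<^sub>R w"
  have "T *v v = T *v (T *v (T *v w)) - (b + c) *\<^sub>R (T *v (T *v w)) + (b * c) *\<^sub>R (T *v w)"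
    by (simp add: v_def matrix_vector_right_distrib matrix_vector_mult_diff_distrib
        matrix_vector_mult_scaleR)
  also have "\<dots> = a *\<^sub>R v"
    using roots unfolding annihilated_by_roots_def v_def by (simp add: algebra_simps)
  finally have "T *v v = a *\<^sub>R v" .
  moreover have "omega u v = (a - b) * (a - c) * (u \<bullet> u)"
  proof -
    have shift: "omega u (T *v x) = a * omega u x" for x
      using T_sym[of u x] u(2) by (simp add: omega_bilinear)
    have "omega u w = u \<bullet> u" unfolding w_def by (rule omega_Jmat_self)
    then show ?thesis
      by (simp add: v_def omega_bilinear shift algebra_simps)
  qed
  ultimately show ?thesis using assms(3,4) u(1) by auto
qed

lemma skew_hamiltonian_symplectic_eigenpairs:
  fixes A :: "real^6^6" and lam :: "nat \<Rightarrow> real"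
  assumes skew: "transpose A ** Jmat = Jmat ** A"
    and distinct: "\<forall>i\<in>{1,2,3}. \<forall>j\<in>{1,2,3}. i \<noteq> j \<longrightarrow> lam i \<noteq> lam j"
    and singular: "\<And>k. k \<in> {1,2,3} \<Longrightarrow> det (lam k *\<^sub>R mat 1 - A) = 0"
  obtains u v where "\<forall>k\<in>{1,2,3}. transpose A *v u k = lam k *\<^sub>R u k
      \<and> transpose A *v v k = lam k *\<^sub>R v k \<and> omega (u k) (v k) \<noteq> 0"
proof -
  define T where "T = transpose A"
  have eigenvector: "\<exists>u. u \<noteq> 0 \<and> T *v u = lam k *\<^sub>R u" if "k \<in> {1,2,3}" for k
  proof -
    have "transpose (lam k *\<^sub>R mat 1 - A) = lam k *\<^sub>R mat 1 - T"
      by (simp add: T_def vec_eq_iff transpose_def mat_def)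
    then have "det (lam k *\<^sub>R mat 1 - T) = 0" using singular[OF that] by (metis det_transpose)
    then show ?thesis by (metis eigenvector_of_det_zero)
  qed
  have dist: "lam 1 \<noteq> lam 2" "lam 1 \<noteq> lam 3" "lam 2 \<noteq> lam 3"
    using distinct by auto
  have "transpose T ** Jmat = Jmat ** T"
    using skew_hamiltonian_transpose[OF skew] by (simp add: T_def)
  from skew_hamiltonian_annihilated_by_eigenvalues[OF this distinct eigenvector]
  have roots: "annihilated_by_roots T (lam 1) (lam 2) (lam 3)" .
  have T_sym: "\<And>x y. omega (T *v x) y = omega x (T *v y)"
    unfolding T_def by (rule skew_hamiltonian_omega_symmetric[OF skew])
  have "\<exists>u v. T *v u = lam k *\<^sub>R u \<and> T *v v = lam k *\<^sub>R v \<and> omega u v \<noteq> 0"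
    if k: "k \<in> {1,2,3}" for k
  proof -
    obtain u where u: "u \<noteq> 0" "T *v u = lam k *\<^sub>R u" using eigenvector[OF k] by blast
    obtain b c where "annihilated_by_roots T (lam k) b c" "lam k \<noteq> b" "lam k \<noteq> c"
      using k roots annihilated_by_roots_perms[OF roots] dist by fastforce
    then show ?thesis
      using exists_symplectic_eigenpair[OF T_sym _ _ _ u] u(2) by blast
  qed
  then have "\<exists>u v. \<forall>k\<in>{1,2,3}. T *v u k = lam k *\<^sub>R u k \<and> T *v v k = lam k *\<^sub>R v k
      \<and> omega (u k) (v k) \<noteq> 0"
    by (subst bchoice_iff[symmetric], subst bchoice_iff[symmetric]) blast
  then show ?thesis using that unfolding T_def by blast
qed

subsection \<open>Symplectic eigenbases\<close>

lemma biorthogonal_expansion: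
  fixes col row :: "'n::finite \<Rightarrow> real^'n"
  assumes "\<And>a b. row a \<bullet> col b = (if a = b then 1 else 0)"
  shows "w = (\<Sum>b\<in>UNIV. (row b \<bullet> w) *\<^sub>R col b)"
    and "trace X = (\<Sum>b\<in>UNIV. row b \<bullet> (X *v col b))"
proof -
  define U :: "real^'n^'n" where "U = (\<chi> i j. col j $ i)"
  define R :: "real^'n^'n" where "R = (\<chi> a j. row a $ j)"
  have "R ** U = mat 1"
    using assms by (simp add: vec_eq_iff U_def R_def matrix_matrix_mult_def mat_def inner_vec_def)
  then have UR: "U ** R = mat 1" by (rule matrix_left_right_inverse1)
  have "w = U *v (R *v w)" by (simp add: matrix_vector_mul_assoc UR)
  also have "\<dots> = (\<Sum>b\<in>UNIV. (row b \<bullet> w) *\<^sub>R col b)"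
    by (simp add: vec_eq_iff U_def R_def matrix_vector_mult_def inner_vec_def sum_component
        mult.commute)
  finally show "w = (\<Sum>b\<in>UNIV. (row b \<bullet> w) *\<^sub>R col b)" .
  have "trace X = trace ((X ** U) ** R)" by (simp flip: matrix_mul_assoc add: UR)
  also have "\<dots> = trace (R ** (X ** U))" by (rule trace_mul_sym)
  finally show "trace X = (\<Sum>b\<in>UNIV. row b \<bullet> (X *v col b))"
    by (simp add: trace_def U_def R_def matrix_matrix_mult_def matrix_vector_mult_def inner_vec_def)
qed

lemma symplectic_pairs_expansion:
  fixes u v :: "nat \<Rightarrow> real^6"
  assumes orth: "\<And>j k. j \<in> {1,2,3} \<Longrightarrow> k \<in> {1,2,3} \<Longrightarrow> j \<noteq> k \<Longrightarrow>
      omega (u j) (u k) = 0 \<and> omega (u j) (v k) = 0 \<and> omega (v j) (v k) = 0"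
    and nondeg: "\<And>k. k \<in> {1,2,3} \<Longrightarrow> omega (u k) (v k) \<noteq> 0"
  shows "w = (\<Sum>k\<in>{1,2,3}. (omega w (v k) / omega (u k) (v k)) *\<^sub>R u k
              + (omega (u k) w / omega (u k) (v k)) *\<^sub>R v k)"
    and "trace X = (\<Sum>k\<in>{1,2,3}. (omega (X *v u k) (v k) + omega (u k) (X *v v k))
              / omega (u k) (v k))"
proof -
  define col :: "6 \<Rightarrow> real^6" where "col i = (if i = 0 then u 1 else if i = 1 then v 1
      else if i = 2 then u 2 else if i = 3 then v 2 else if i = 4 then u 3 else v 3)" for i
  define dual :: "nat \<Rightarrow> real^6" where "dual k = (1 / omega (u k) (v k)) *\<^sub>R (Jmat *v v k)" for k
  define dual' :: "nat \<Rightarrow> real^6"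
    where "dual' k = (1 / omega (u k) (v k)) *\<^sub>R (transpose Jmat *v u k)" for k
  define row :: "6 \<Rightarrow> real^6" where "row i = (if i = 0 then dual 1 else if i = 1 then dual' 1
      else if i = 2 then dual 2 else if i = 3 then dual' 2 else if i = 4 then dual 3 else dual' 3)"
    for i
  have dual: "dual k \<bullet> x = omega x (v k) / omega (u k) (v k)" for k x
    by (simp add: dual_def omega_def inner_commute)
  have dual': "dual' k \<bullet> x = omega (u k) x / omega (u k) (v k)" for k x
    by (simp add: dual'_def omega_def dot_lmul_matrix)
  have zero: "omega (u j) (u k) = 0" "omega (u j) (v k) = 0" "omega (v j) (u k) = 0"
      "omega (v j) (v k) = 0" if "j \<in> {1,2,3}" "k \<in> {1,2,3}" "j \<noteq> k" for j k
    using orth[OF that] orth[of k j] that omega_antisym[of "v j" "u k"] by auto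
  have swap: "omega (v k) (u k) = - omega (u k) (v k)" for k
    by (rule omega_antisym)
  have "\<forall>a b. row a \<bullet> col b = (if a = b then 1 else 0)"
    unfolding forall_6 using nondeg[of 1] nondeg[of 2] nondeg[of 3]
    by (simp add: row_def col_def dual dual' zero swap)
  note expansion = biorthogonal_expansion[OF this[rule_format]]
  show "w = (\<Sum>k\<in>{1,2,3}. (omega w (v k) / omega (u k) (v k)) *\<^sub>R u k
              + (omega (u k) w / omega (u k) (v k)) *\<^sub>R v k)"
    by (subst expansion(1)[where w=w]) (simp add: sum_6 row_def col_def dual dual' add.assoc)
  show "trace X = (\<Sum>k\<in>{1,2,3}. (omega (X *v u k) (v k) + omega (u k) (X *v v k))
              / omega (u k) (v k))"
    by (subst expansion(2)[where X=X])
      (simp add: sum_6 row_def col_def dual dual' add_divide_distrib add.assoc)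
qed

lemma symplectic_eigenbasis:
  fixes T :: "real^6^6" and lam :: "nat \<Rightarrow> real" and u v :: "nat \<Rightarrow> real^6"
  assumes T_sym: "\<And>x y. omega (T *v x) y = omega x (T *v y)"
    and distinct: "\<forall>i\<in>{1,2,3}. \<forall>j\<in>{1,2,3}. i \<noteq> j \<longrightarrow> lam i \<noteq> lam j"
    and pairs: "\<forall>k\<in>{1,2,3}. T *v u k = lam k *\<^sub>R u k \<and> T *v v k = lam k *\<^sub>R v k
      \<and> omega (u k) (v k) \<noteq> 0"
  shows "\<And>k w. k \<in> {1,2,3} \<Longrightarrow> T *v w = lam k *\<^sub>R w \<Longrightarrow>
      w = (omega w (v k) / omega (u k) (v k)) *\<^sub>R u k + (omega (u k) w / omega (u k) (v k)) *\<^sub>R v k"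
    and "(\<And>k w. k \<in> {1,2,3} \<Longrightarrow> T *v w = lam k *\<^sub>R w \<Longrightarrow> X *v w = c k *\<^sub>R w) \<Longrightarrow>
      trace X = 2 * (\<Sum>k\<in>{1,2,3}. c k)"
    and "(\<And>k w. k \<in> {1,2,3} \<Longrightarrow> T *v w = lam k *\<^sub>R w \<Longrightarrow> X *v w = Y *v w) \<Longrightarrow> X = Y"
proof -
  have orth: "omega x y = 0" if "j \<in> {1,2,3}" "k \<in> {1,2,3}" "j \<noteq> k"
    "T *v x = lam j *\<^sub>R x" "T *v y = lam k *\<^sub>R y" for j k x y
    using omega_eigenvectors_orthogonal[OF T_sym that(4,5)] distinct that(1-3) by blast
  have nondeg: "\<And>k. k \<in> {1,2,3} \<Longrightarrow> omega (u k) (v k) \<noteq> 0"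
    using pairs by blast
  have "omega (u j) (u k) = 0 \<and> omega (u j) (v k) = 0 \<and> omega (v j) (v k) = 0"
    if "j \<in> {1,2,3}" "k \<in> {1,2,3}" "j \<noteq> k" for j k
    using orth[OF that] pairs that(1,2) by blast
  note expansion = symplectic_pairs_expansion[OF this nondeg]
  show "w = (omega w (v k) / omega (u k) (v k)) *\<^sub>R u k + (omega (u k) w / omega (u k) (v k)) *\<^sub>R v k"
    if k: "k \<in> {1,2,3}" and w: "T *v w = lam k *\<^sub>R w" for k w
  proof -
    define f where "f j = (omega w (v j) / omega (u j) (v j)) *\<^sub>R u j
        + (omega (u j) w / omega (u j) (v j)) *\<^sub>R v j" for j
    have "f j = 0" if "j \<in> {1,2,3} - {k}" for j
    proof -
      have "omega w (v j) = 0" "omega (u j) w = 0"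
        using orth[OF k _ _ w] orth[OF _ k _ _ w] pairs that by auto
      then show ?thesis by (simp add: f_def)
    qed
    then have rest: "(\<Sum>j\<in>{1,2,3} - {k}. f j) = 0" by (rule sum.neutral[rule_format])
    have "w = (\<Sum>j\<in>{1,2,3}. f j)" unfolding f_def by (rule expansion(1))
    also have "\<dots> = f k + (\<Sum>j\<in>{1,2,3} - {k}. f j)" using k by (intro sum.remove) auto
    also have "\<dots> = f k" unfolding rest by simp
    finally show ?thesis unfolding f_def .
  qed
  show "trace X = 2 * (\<Sum>k\<in>{1,2,3}. c k)"
    if scalar: "\<And>k w. k \<in> {1,2,3} \<Longrightarrow> T *v w = lam k *\<^sub>R w \<Longrightarrow> X *v w = c k *\<^sub>R w"
  proof -
    have "X *v u k = c k *\<^sub>R u k" "X *v v k = c k *\<^sub>R v k" if "k \<in> {1,2,3}" for k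
      using that pairs scalar by blast+
    then show ?thesis
      using expansion(2)[where X=X] nondeg by (simp add: omega_bilinear)
  qed
  show "X = Y" if agree: "\<And>k w. k \<in> {1,2,3} \<Longrightarrow> T *v w = lam k *\<^sub>R w \<Longrightarrow> X *v w = Y *v w"
  proof (rule matrix_eq[THEN iffD2], rule allI)
    fix w
    have "X *v u k = Y *v u k" "X *v v k = Y *v v k" if "k \<in> {1,2,3}" for k
      using that pairs agree by blast+
    then have "X *v (\<Sum>k\<in>{1,2,3}. (omega w (v k) / omega (u k) (v k)) *\<^sub>R u k
        + (omega (u k) w / omega (u k) (v k)) *\<^sub>R v k)
      = Y *v (\<Sum>k\<in>{1,2,3}. (omega w (v k) / omega (u k) (v k)) *\<^sub>R u k
        + (omega (u k) w / omega (u k) (v k)) *\<^sub>R v k)"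
      by (simp add: matrix_vector_right_distrib matrix_vector_mult_scaleR)
    then show "X *v w = Y *v w"
      by (subst (1 2) expansion(1)[where w=w])
  qed
qed

subsection \<open>Squares of Hamiltonian matrices\<close>

lemma hamiltonian_square_scalar_on_symplectic_plane:
  fixes M :: "real^6^6"
  assumes M_ham: "\<And>x y. omega (M *v x) y = - omega x (M *v y)"
    and invariant: "\<And>w. w \<in> E \<Longrightarrow> M *v w \<in> E"
    and "u \<in> E" "v \<in> E"
    and plane: "\<And>w. w \<in> E \<Longrightarrow> w = (omega w v / omega u v) *\<^sub>R u + (omega u w / omega u v) *\<^sub>R v"
  obtains \<kappa> where "\<And>w. w \<in> E \<Longrightarrow> M *v (M *v w) = \<kappa> *\<^sub>R w"
proof -
  define a b c where "a = omega (M *v u) v / omega u v" and "b = omega u (M *v u) / omega u v"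
    and "c = omega (M *v v) v / omega u v"
  have Mu: "M *v u = a *\<^sub>R u + b *\<^sub>R v"
    using plane[OF invariant[OF \<open>u \<in> E\<close>]] by (simp add: a_def b_def)
  text \<open>On the plane \<open>M\<close> is trace-free, so its square is scalar by Cayley--Hamilton.\<close>
  have "omega u (M *v v) = - omega (M *v u) v" using M_ham[of u v] by simp
  then have Mv: "M *v v = c *\<^sub>R u - a *\<^sub>R v"
    using plane[OF invariant[OF \<open>v \<in> E\<close>]] by (simp add: a_def c_def)
  have MMu: "M *v (M *v u) = (a\<^sup>2 + b * c) *\<^sub>R u"
    and MMv: "M *v (M *v v) = (a\<^sup>2 + b * c) *\<^sub>R v"
    by (simp_all add: Mu Mv matrix_vector_right_distrib matrix_vector_mult_diff_distrib
        matrix_vector_mult_scaleR algebra_simps power2_eq_square)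
  show ?thesis
  proof (rule that)
    fix w assume "w \<in> E"
    then obtain p q where w: "w = p *\<^sub>R u + q *\<^sub>R v" using plane by blast
    show "M *v (M *v w) = (a\<^sup>2 + b * c) *\<^sub>R w"
      by (simp add: w MMu MMv matrix_vector_right_distrib matrix_vector_mult_scaleR algebra_simps)
  qed
qed

lemma hamiltonian_square_scalar_on_eigenspaces:
  fixes T M :: "real^6^6" and lam :: "nat \<Rightarrow> real" and u v :: "nat \<Rightarrow> real^6"
  assumes T_sym: "\<And>x y. omega (T *v x) y = omega x (T *v y)"
    and M_ham: "\<And>x y. omega (M *v x) y = - omega x (M *v y)"
    and commute: "M ** T = T ** M"
    and distinct: "\<forall>i\<in>{1,2,3}. \<forall>j\<in>{1,2,3}. i \<noteq> j \<longrightarrow> lam i \<noteq> lam j"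
    and pairs: "\<forall>k\<in>{1,2,3}. T *v u k = lam k *\<^sub>R u k \<and> T *v v k = lam k *\<^sub>R v k
      \<and> omega (u k) (v k) \<noteq> 0"
  obtains \<kappa> where "\<And>k w. k \<in> {1,2,3} \<Longrightarrow> T *v w = lam k *\<^sub>R w \<Longrightarrow> (M ** M) *v w = \<kappa> k *\<^sub>R w"
proof -
  have "\<exists>\<kappa>. \<forall>w. T *v w = lam k *\<^sub>R w \<longrightarrow> M *v (M *v w) = \<kappa> *\<^sub>R w" if k: "k \<in> {1,2,3}" for k
  proof -
    define E where "E = {w. T *v w = lam k *\<^sub>R w}"
    have invariant: "M *v w \<in> E" if "w \<in> E" for w
    proof -
      have "T *v (M *v w) = M *v (T *v w)" by (simp add: matrix_vector_mul_assoc commute)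
      with that show ?thesis by (simp add: E_def matrix_vector_mult_scaleR)
    qed
    have "u k \<in> E" "v k \<in> E" using pairs k unfolding E_def by blast+
    moreover have "w = (omega w (v k) / omega (u k) (v k)) *\<^sub>R u k
        + (omega (u k) w / omega (u k) (v k)) *\<^sub>R v k" if "w \<in> E" for w
      using symplectic_eigenbasis(1)[OF T_sym distinct pairs k] that by (simp add: E_def)
    ultimately obtain \<kappa> where "\<And>w. w \<in> E \<Longrightarrow> M *v (M *v w) = \<kappa> *\<^sub>R w"
      using hamiltonian_square_scalar_on_symplectic_plane[OF M_ham invariant] by blast
    then show ?thesis unfolding E_def by blast
  qed
  then have "\<forall>k\<in>{1,2,3}. \<exists>\<kappa>. \<forall>w. T *v w = lam k *\<^sub>R w \<longrightarrow> M *v (M *v w) = \<kappa> *\<^sub>R w"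
    by blast
  from bchoice[OF this] obtain \<kappa>
    where \<kappa>: "\<forall>k\<in>{1,2,3}. \<forall>w. T *v w = lam k *\<^sub>R w \<longrightarrow> M *v (M *v w) = \<kappa> k *\<^sub>R w"
    by blast
  show ?thesis
  proof (rule that)
    fix k w assume "k \<in> {1,2,3}" "T *v w = lam k *\<^sub>R w"
    then have "M *v (M *v w) = \<kappa> k *\<^sub>R w" using \<kappa> by blast
    then show "(M ** M) *v w = \<kappa> k *\<^sub>R w" by (simp add: matrix_vector_mul_assoc)
  qed
qed

lemma hamiltonian_square_expansion:
  fixes T M :: "real^6^6" and lam :: "nat \<Rightarrow> real" and u v :: "nat \<Rightarrow> real^6"
    and C :: "nat \<Rightarrow> real^6^6"
  assumes T_sym: "\<And>x y. omega (T *v x) y = omega x (T *v y)"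
    and M_ham: "\<And>x y. omega (M *v x) y = - omega x (M *v y)"
    and commute: "M ** T = T ** M"
    and distinct: "\<forall>i\<in>{1,2,3}. \<forall>j\<in>{1,2,3}. i \<noteq> j \<longrightarrow> lam i \<noteq> lam j"
    and pairs: "\<forall>k\<in>{1,2,3}. T *v u k = lam k *\<^sub>R u k \<and> T *v v k = lam k *\<^sub>R v k
      \<and> omega (u k) (v k) \<noteq> 0"
    and C: "\<And>i k w. i \<in> {1,2,3} \<Longrightarrow> k \<in> {1,2,3} \<Longrightarrow> T *v w = lam k *\<^sub>R w \<Longrightarrow>
      C i *v w = (if i = k then -1 else 1) *\<^sub>R w"
  shows "M ** M = (1/8 * trace (M ** M)) *\<^sub>R mat 1
    + (\<Sum>i\<in>{1,2,3}. (1/8 * trace (C i ** (M ** M))) *\<^sub>R C i)"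
proof -
  note basis = symplectic_eigenbasis[OF T_sym distinct pairs]
  obtain \<kappa> where MM: "\<And>k w. k \<in> {1,2,3} \<Longrightarrow> T *v w = lam k *\<^sub>R w \<Longrightarrow> (M ** M) *v w = \<kappa> k *\<^sub>R w"
    using hamiltonian_square_scalar_on_eigenspaces[OF T_sym M_ham commute distinct pairs] by blast
  have tr_MM: "trace (M ** M) = 2 * (\<Sum>k\<in>{1,2,3}. \<kappa> k)"
    using basis(2) MM by blast
  have tr_CMM: "trace (C i ** (M ** M)) = 2 * (\<Sum>k\<in>{1,2,3}. (if i = k then -1 else 1) * \<kappa> k)"
    if i: "i \<in> {1,2,3}" for i
  proof (rule basis(2))
    fix k x assume "k \<in> {1,2,3}" "T *v x = lam k *\<^sub>R x"
    then show "(C i ** (M ** M)) *v x = ((if i = k then -1 else 1) * \<kappa> k) *\<^sub>R x"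
      using C[OF i] MM by (simp add: matrix_vector_mult_scaleR flip: matrix_vector_mul_assoc[of "C i"])
  qed
  show ?thesis
  proof (rule basis(3))
    fix k w assume k: "k \<in> {1,2,3}" and w: "T *v w = lam k *\<^sub>R w"
    have "((1/8 * trace (M ** M)) *\<^sub>R mat 1
        + (\<Sum>i\<in>{1,2,3}. (1/8 * trace (C i ** (M ** M))) *\<^sub>R C i)) *v w
      = (1/8 * trace (M ** M)
        + (\<Sum>i\<in>{1,2,3}. 1/8 * trace (C i ** (M ** M)) * (if i = k then -1 else 1))) *\<^sub>R w"
      by (simp add: C[OF _ k w] matrix_vector_mult_add_rdistrib scaleR_add_left
          flip: scaleR_matrix_vector_assoc)
    also have "\<dots> = \<kappa> k *\<^sub>R w"
      using k by (auto simp: tr_MM tr_CMM field_simps)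
    finally show "(M ** M) *v w = ((1/8 * trace (M ** M)) *\<^sub>R mat 1
        + (\<Sum>i\<in>{1,2,3}. (1/8 * trace (C i ** (M ** M))) *\<^sub>R C i)) *v w"
      using MM[OF k w] by simp
  qed
qed

lemma transpose_matrix_quadratic_on_eigenvector:
  fixes A :: "real^'n^'n"
  assumes "transpose A *v w = l *\<^sub>R w"
  shows "transpose (a *\<^sub>R mat 1 + b *\<^sub>R A + c *\<^sub>R (A ** A)) *v w = (a + b * l + c * l\<^sup>2) *\<^sub>R w"
proof -
  have "transpose (a *\<^sub>R mat 1 + b *\<^sub>R A + c *\<^sub>R (A ** A))
      = a *\<^sub>R mat 1 + b *\<^sub>R transpose A + c *\<^sub>R (transpose A ** transpose A)"
    by (simp add: vec_eq_iff transpose_def mat_def matrix_matrix_mult_def mult.commute)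
  then show ?thesis
    using assms
    by (simp add: matrix_vector_mult_add_rdistrib matrix_vector_mult_scaleR power2_eq_square
        algebra_simps flip: scaleR_matrix_vector_assoc matrix_vector_mul_assoc)
qed

lemma hamiltonian_square_expansion_skew_hamiltonian:
  fixes A M :: "real^6^6" and lam \<alpha> \<beta> \<gamma> :: "nat \<Rightarrow> real" and B :: "nat \<Rightarrow> real^6^6"
  assumes skew: "transpose A ** Jmat = Jmat ** A"
    and distinct: "\<forall>i\<in>{1,2,3}. \<forall>j\<in>{1,2,3}. i \<noteq> j \<longrightarrow> lam i \<noteq> lam j"
    and singular: "\<And>k. k \<in> {1,2,3} \<Longrightarrow> det (lam k *\<^sub>R mat 1 - A) = 0"
    and interp: "\<forall>i\<in>{1,2,3}. \<forall>j\<in>{1,2,3}.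
      \<alpha> i + \<beta> i * lam j + \<gamma> i * (lam j)\<^sup>2 = (if i = j then -1 else 1)"
    and B: "\<forall>i\<in>{1,2,3}. B i = \<alpha> i *\<^sub>R mat 1 + \<beta> i *\<^sub>R A + \<gamma> i *\<^sub>R (A ** A)"
    and M_ham: "\<And>x y. omega (M *v x) y = - omega x (M *v y)"
    and commute: "M ** transpose A = transpose A ** M"
  shows "M ** M = (1/8 * trace (M ** M)) *\<^sub>R mat 1
    + (\<Sum>i\<in>{1,2,3}. (1/8 * trace (transpose (B i) ** (M ** M))) *\<^sub>R transpose (B i))"
proof -
  obtain u v where pairs: "\<forall>k\<in>{1,2,3}. transpose A *v u k = lam k *\<^sub>R u k
      \<and> transpose A *v v k = lam k *\<^sub>R v k \<and> omega (u k) (v k) \<noteq> 0"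
    using skew_hamiltonian_symplectic_eigenpairs[OF skew distinct singular] by blast
  show ?thesis
  proof (rule hamiltonian_square_expansion[OF skew_hamiltonian_omega_symmetric[OF skew]
        M_ham commute distinct pairs])
    fix i k :: nat and w
    assume i: "i \<in> {1,2,3}" and k: "k \<in> {1,2,3}" and w: "transpose A *v w = lam k *\<^sub>R w"
    have "B i = \<alpha> i *\<^sub>R mat 1 + \<beta> i *\<^sub>R A + \<gamma> i *\<^sub>R (A ** A)" using B i by blast
    then have "transpose (B i) *v w = (\<alpha> i + \<beta> i * lam k + \<gamma> i * (lam k)\<^sup>2) *\<^sub>R w"
      using transpose_matrix_quadratic_on_eigenvector[OF w] by simp
    moreover have "\<alpha> i + \<beta> i * lam k + \<gamma> i * (lam k)\<^sup>2 = (if i = k then -1 else 1)"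
      using interp i k by blast
    ultimately show "transpose (B i) *v w = (if i = k then -1 else 1) *\<^sub>R w" by (simp only:)
  qed
qed

subsection \<open>Derivatives of cubic Hamiltonians\<close>

lemma has_derivative_vec_nth: "((\<lambda>x::real^'n. x $ i) has_derivative (\<lambda>h. h $ i)) F"
  by (rule bounded_linear.has_derivative[OF bounded_linear_vec_nth has_derivative_ident])

lemma pderiv_eq_derivative_axis:
  fixes F :: "real^'n \<Rightarrow> real"
  assumes "(F has_derivative D) (at x)"
  shows "pderiv F x j = D (axis j 1)"
proof -
  have line: "((\<lambda>t::real. x + t *\<^sub>R axis j 1) has_derivative (\<lambda>t. t *\<^sub>R axis j 1)) (at 0)"
    by (auto intro!: derivative_eq_intros)
  have "((\<lambda>t. F (x + t *\<^sub>R axis j 1)) has_derivative (\<lambda>t. D (t *\<^sub>R axis j 1))) (at 0)"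
    using has_derivative_compose[OF line, of F D] assms by simp
  moreover have "(\<lambda>t. D (t *\<^sub>R axis j 1)) = (\<lambda>t. D (axis j 1) * t)"
    using linear_scale[OF has_derivative_linear[OF assms]] by (auto simp: mult.commute)
  ultimately have "((\<lambda>t. F (x + t *\<^sub>R axis j 1)) has_field_derivative D (axis j 1)) (at 0)"
    by (simp add: has_field_derivative_def)
  then show ?thesis unfolding pderiv_def by (rule DERIV_imp_deriv)
qed

lemma jac_matrix_vector_mult:
  fixes F :: "real^'n \<Rightarrow> real^'m" and K :: "real^'m^'k"
  assumes "\<And>l. ((\<lambda>y. F y $ l) has_derivative D l) (at x)"
  shows "jac (\<lambda>y. K *v F y) x = K ** jac F x"
proof -
  have deriv: "((\<lambda>y. (K *v F y) $ i) has_derivative (\<lambda>h. \<Sum>l\<in>UNIV. K$i$l * D l h)) (at x)"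
    for i
    unfolding matrix_vector_mult_def vec_lambda_beta
    by (intro has_derivative_sum has_derivative_mult_right assms)
  show ?thesis
    by (simp add: vec_eq_iff jac_def matrix_matrix_mult_def pderiv_eq_derivative_axis[OF deriv]
        pderiv_eq_derivative_axis[OF assms])
qed

lemma hom_cubic_grad_has_symmetric_derivative:
  assumes "hom_cubic H"
  obtains D where "\<And>a. ((\<lambda>y. grad H y $ a) has_derivative D a) (at x)"
    and "\<And>a b. D a (axis b 1) = D b (axis a 1)"
proof -
  obtain c where c: "H = (\<lambda>y. \<Sum>i\<in>UNIV. \<Sum>j\<in>UNIV. \<Sum>k\<in>UNIV. c i j k * y$i * y$j * y$k)"
    using assms unfolding hom_cubic_def by blast
  define e :: "6 \<Rightarrow> real^6" where "e a = axis a 1" for a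
  define G where "G a y = (\<Sum>i\<in>UNIV. \<Sum>j\<in>UNIV. \<Sum>k\<in>UNIV.
      c i j k * (e a $ i * y$j * y$k + y$i * e a $ j * y$k + y$i * y$j * e a $ k))" for a y
  define D where "D a h = (\<Sum>i\<in>UNIV. \<Sum>j\<in>UNIV. \<Sum>k\<in>UNIV.
      c i j k * (e a $ i * (h$j * x$k + x$j * h$k) + e a $ j * (h$i * x$k + x$i * h$k)
        + e a $ k * (h$i * x$j + x$i * h$j)))" for a h
  have H_deriv: "(H has_derivative (\<lambda>h. \<Sum>i\<in>UNIV. \<Sum>j\<in>UNIV. \<Sum>k\<in>UNIV.
      c i j k * (h$i * y$j * y$k + y$i * h$j * y$k + y$i * y$j * h$k))) (at y)" for y
    unfolding c
    by (intro has_derivative_sum) (auto intro!: derivative_eq_intros has_derivative_vec_nth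
        simp: fun_eq_iff algebra_simps)
  have grad: "(\<lambda>y. grad H y $ a) = G a" for a
    by (simp add: fun_eq_iff grad_def pderiv_eq_derivative_axis[OF H_deriv] G_def e_def)
  show ?thesis
  proof
    show "((\<lambda>y. grad H y $ a) has_derivative D a) (at x)" for a
      unfolding grad G_def D_def
      by (intro has_derivative_sum) (auto intro!: derivative_eq_intros has_derivative_vec_nth
          simp: fun_eq_iff algebra_simps)
    show "D a (axis b 1) = D b (axis a 1)" for a b
      unfolding D_def e_def by (intro sum.cong refl) (simp add: algebra_simps)
  qed
qed

lemma hess_symmetric_hom_cubic:
  assumes "hom_cubic H"
  shows "transpose (hess H x) = hess H x"
proof -
  obtain D where D: "\<And>a. ((\<lambda>y. grad H y $ a) has_derivative D a) (at x)"
    and sym: "\<And>a b. D a (axis b 1) = D b (axis a 1)"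
    using hom_cubic_grad_has_symmetric_derivative[OF assms] by blast
  have "hess H x $ a $ b = D a (axis b 1)" for a b
    unfolding hess_def jac_def by (simp add: pderiv_eq_derivative_axis[OF D])
  then show ?thesis by (simp add: vec_eq_iff transpose_def sym)
qed

lemma jac_matrix_grad_hom_cubic:
  assumes "hom_cubic H"
  shows "jac (\<lambda>y. K *v grad H y) x = K ** hess H x"
proof -
  obtain D where D: "\<And>a. ((\<lambda>y. grad H y $ a) has_derivative D a) (at x)"
    using hom_cubic_grad_has_symmetric_derivative[OF assms, where x = x] by metis
  from jac_matrix_vector_mult[OF D] show ?thesis unfolding hess_def .
qed

theorem mainTheorem7:
  fixes A :: "real^6^6"
    and H0 H1 H2 :: "real^6 \<Rightarrow> real"
    and f0 :: "real^6 \<Rightarrow> real^6"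
    and lam \<alpha> \<beta> \<gamma> :: "nat \<Rightarrow> real"
    and B :: "nat \<Rightarrow> real^6^6"
  assumes skewHam: "transpose A ** Jmat = Jmat ** A"
    and H0_cubic: "hom_cubic H0"
    and H0_comm: "\<forall>x. A ** hess H0 x = hess H0 x ** transpose A"
    and H1_cubic: "hom_cubic H1"
    and H2_cubic: "hom_cubic H2"
    and H1_grad: "\<forall>x. grad H1 x = A *v grad H0 x"
    and H2_grad: "\<forall>x. grad H2 x = A *v grad H1 x"
    and f0_def: "\<forall>x. f0 x = Jmat *v grad H0 x"
    and lam_distinct: "\<forall>i\<in>{1,2,3}. \<forall>j\<in>{1,2,3}. i \<noteq> j \<longrightarrow> lam i \<noteq> lam j"
    and generic: "\<forall>\<mu>. det (\<mu> *\<^sub>R mat 1 - A) = ((\<mu> - lam 1) * (\<mu> - lam 2) * (\<mu> - lam 3))^2"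
    and interp: "\<forall>i\<in>{1,2,3}. \<forall>j\<in>{1,2,3}.
        \<alpha> i + \<beta> i * lam j + \<gamma> i * (lam j)^2 = (if i = j then -1 else 1)"
    and B_def: "\<forall>i\<in>{1,2,3}. B i = \<alpha> i *\<^sub>R mat 1 + \<beta> i *\<^sub>R A + \<gamma> i *\<^sub>R (A ** A)"
    and nondeg: "\<exists>x. det (jac f0 x) \<noteq> 0"
  shows "\<forall>x. jac f0 x ** jac f0 x =
            (1/8 * trace (jac f0 x ** jac f0 x)) *\<^sub>R mat 1
            + (\<Sum>i\<in>{1,2,3::nat}. (1/8 * trace (transpose (B i) ** (jac f0 x ** jac f0 x)))
                                    *\<^sub>R transpose (B i))
         \<and> (\<forall>i\<in>{1,2,3::nat}.
              1/8 * trace (transpose (B i) ** (jac f0 x ** jac f0 x))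
              = 1/8 * trace (jac f0 x ** jac (\<lambda>y. transpose (B i) *v f0 y) x))"
proof -
  have f0: "f0 = (\<lambda>y. Jmat *v grad H0 y)" using f0_def by (simp add: fun_eq_iff)
  have jac_f0: "jac f0 x = Jmat ** hess H0 x" for x
    unfolding f0 by (rule jac_matrix_grad_hom_cubic[OF H0_cubic])
  have "det (lam k *\<^sub>R mat 1 - A) = 0" if "k \<in> {1,2,3}" for k
    using generic that by auto
  note expansion = hamiltonian_square_expansion_skew_hamiltonian[OF skewHam lam_distinct this
      interp B_def]
  have square: "jac f0 x ** jac f0 x = (1/8 * trace (jac f0 x ** jac f0 x)) *\<^sub>R mat 1
      + (\<Sum>i\<in>{1,2,3::nat}. (1/8 * trace (transpose (B i) ** (jac f0 x ** jac f0 x)))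
          *\<^sub>R transpose (B i))"
    for x
  proof (rule expansion)
    show "omega (jac f0 x *v y) z = - omega y (jac f0 x *v z)" for y z
      unfolding jac_f0
      by (rule hamiltonian_omega_antisym[OF hess_symmetric_hom_cubic[OF H0_cubic]])
    show "jac f0 x ** transpose A = transpose A ** jac f0 x"
      unfolding jac_f0 using skew_hamiltonian_commute_hamiltonian[OF skewHam] H0_comm by blast
  qed
  have "jac (\<lambda>y. C *v f0 y) x = C ** jac f0 x" for C x
    using jac_matrix_grad_hom_cubic[OF H0_cubic, of "C ** Jmat" x]
    by (simp add: f0 jac_f0[unfolded f0] matrix_vector_mul_assoc matrix_mul_assoc)
  then have "1/8 * trace (C ** (jac f0 x ** jac f0 x))
      = 1/8 * trace (jac f0 x ** jac (\<lambda>y. C *v f0 y) x)" for C x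
    by (metis matrix_mul_assoc trace_mul_sym)
  with square show ?thesis by blast
qed

end
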